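(* Let $T>0$, $\lambda>0$, $\phi,\varrho\ge0$, $G\in\mathcal G$. Then $\sup_{t\le T}\|\mathbf D_t^{-1}\|_{\rm op}<\infty$, where $\mathbf D_t=2\lambda\,{\rm id}+\tilde{\mathbf G}_t+\tilde{\mathbf G}_t^*+2\phi\,\mathbf 1_t^*\mathbf 1_t$ on $L^2([0,T],\mathbb R)$.
   Context: $\mathcal G$: nonnegative definite Volterra kernels $G:[0,T]^2\to[0,\infty)$ ($G(t,s)=0$ for $s\ge t$; $\int\int(G(t,s)+G(s,t))f(s)f(t)\ge0$ for all $f\in L^2([0,T],\mathbb R)$) with $\sup_t\int_0^T|G(t,s)|^2ds+\sup_s\int_0^T|G(t,s)|^2dt<\infty$ and $\lim_{h\to0}\int_0^T|G(t+h,s)-G(t,s)|^2ds=0$ for each $t$. $\tilde G(t,s)=2\varrho\mathbb 1_{\{s<t\}}+G(t,s)$; $\tilde{\mathbf G}_t$ has kernel $\tilde G(s,u)\mathbb 1_{\{u\ge t\}}$; $\mathbf 1_t$ has kernel $(u,s)\mapsto\mathbb 1_{\{u\ge s\}}\mathbb 1_{\{s\ge t\}}$; ${}^*$ is the $L^2$-adjoint; $\mathbf D_t$ is invertible; $\|\mathbf G\|_{\rm op}=\sup_{f\neq0}\|\mathbf Gf\|_{L^2}/\|f\|_{L^2}$. *)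

theory Defs
  imports "HOL-Analysis.Analysis"
begin

text \<open>Square-integrable functions on [0,T] (represented by measurable functions; equality
  in L2 is almost-everywhere equality on [0,T]).\<close>
definition L2 :: "real \<Rightarrow> (real \<Rightarrow> real) set" where
  "L2 T = {f. f \<in> borel_measurable lborel \<and> set_integrable lborel {0..T} (\<lambda>x. (f x)\<^sup>2)}"

definition L2norm :: "real \<Rightarrow> (real \<Rightarrow> real) \<Rightarrow> real" where
  "L2norm T f = sqrt (set_lebesgue_integral lborel {0..T} (\<lambda>x. (f x)\<^sup>2))"

definition ae_eq :: "real \<Rightarrow> (real \<Rightarrow> real) \<Rightarrow> (real \<Rightarrow> real) \<Rightarrow> bool" where
  "ae_eq T f g \<longleftrightarrow> (AE x in lborel. x \<in> {0..T} \<longrightarrow> f x = g x)"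

definition kop :: "real \<Rightarrow> (real \<Rightarrow> real \<Rightarrow> real) \<Rightarrow> (real \<Rightarrow> real) \<Rightarrow> (real \<Rightarrow> real)" where
  "kop T K f = (\<lambda>s. set_lebesgue_integral lborel {0..T} (\<lambda>u. K s u * f u))"

definition adjk :: "(real \<Rightarrow> real \<Rightarrow> real) \<Rightarrow> (real \<Rightarrow> real \<Rightarrow> real)" where
  "adjk K = (\<lambda>s u. K u s)"

definition kernel_class :: "real \<Rightarrow> (real \<Rightarrow> real \<Rightarrow> real) \<Rightarrow> bool" where
  "kernel_class T G \<longleftrightarrow>
     (\<lambda>(t, s). G t s) \<in> borel_measurable borel \<and>
     (\<forall>t\<in>{0..T}. \<forall>s\<in>{0..T}. G t s \<ge> 0) \<and>
     (\<forall>t\<in>{0..T}. \<forall>s\<in>{0..T}. s \<ge> t \<longrightarrow> G t s = 0) \<and>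
     (\<forall>f\<in>L2 T.
        (\<integral>t\<in>{0..T}. (\<integral>s\<in>{0..T}. (G t s + G s t) * f s * f t \<partial>lborel) \<partial>lborel) \<ge> 0) \<and>
     (\<exists>M::real. (\<forall>t\<in>{0..T}. (\<integral>\<^sup>+ s\<in>{0..T}. ennreal ((G t s)\<^sup>2) \<partial>lborel) \<le> ennreal M) \<and>
                (\<forall>s\<in>{0..T}. (\<integral>\<^sup>+ t\<in>{0..T}. ennreal ((G t s)\<^sup>2) \<partial>lborel) \<le> ennreal M)) \<and>
     (\<forall>t\<in>{0..T}.
        ((\<lambda>r. \<integral>\<^sup>+ s\<in>{0..T}. ennreal ((G r s - G t s)\<^sup>2) \<partial>lborel) \<longlongrightarrow> 0)
          (at t within {0..T}))"

definition Gtil :: "real \<Rightarrow> (real \<Rightarrow> real \<Rightarrow> real) \<Rightarrow> real \<Rightarrow> real \<Rightarrow> real" where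
  "Gtil \<rho> G t s = 2 * \<rho> * (if s < t then 1 else 0) + G t s"

definition Gtil_t :: "real \<Rightarrow> (real \<Rightarrow> real \<Rightarrow> real) \<Rightarrow> real \<Rightarrow> real \<Rightarrow> real \<Rightarrow> real" where
  "Gtil_t \<rho> G t s u = Gtil \<rho> G s u * (if u \<ge> t then 1 else 0)"

definition one_t :: "real \<Rightarrow> real \<Rightarrow> real \<Rightarrow> real" where
  "one_t t u s = (if u \<ge> s then 1 else 0) * (if s \<ge> t then 1 else 0)"

definition D_op :: "real \<Rightarrow> real \<Rightarrow> real \<Rightarrow> real \<Rightarrow> (real \<Rightarrow> real \<Rightarrow> real) \<Rightarrow> real
                     \<Rightarrow> (real \<Rightarrow> real) \<Rightarrow> (real \<Rightarrow> real)" where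
  "D_op T lam \<phi> \<rho> G t f = (\<lambda>s.
      2 * lam * f s
      + kop T (Gtil_t \<rho> G t) f s
      + kop T (adjk (Gtil_t \<rho> G t)) f s
      + 2 * \<phi> * kop T (adjk (one_t t)) (kop T (one_t t) f) s)"

end

theory Submission
  imports Defs
begin

text \<open>
  The operator D_t is coercive with a constant independent of t: for f in L^2,
  \<langle>D_t f, f\<rangle> = 2\<lambda> \<parallel>f\<parallel>^2 + \<langle>(\<tilde>G_t + \<tilde>G_t^*) f, f\<rangle> + 2\<phi> \<parallel>1_t f\<parallel>^2.
  With h = f 1_[t,T], the Volterra property of G turns the middle term into
  \<integral>\<integral> (\<tilde>G(s,u) + \<tilde>G(u,s)) h(u) h(s) du ds = 2\<rho> (\<integral> h)^2 + \<integral>\<integral> (G(s,u) + G(u,s)) h(u) h(s) du ds,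
  which is nonnegative because G is nonnegative definite. Hence 2\<lambda> \<parallel>f\<parallel>^2 \<le> \<langle>D_t f, f\<rangle>, and
  Young's inequality turns D_t f = g into \<parallel>f\<parallel> \<le> \<parallel>g\<parallel> / (2\<lambda>).
\<close>

section \<open>L2 functions on [0, T]\<close>

lemma abs_mult_le_half_sum_squares: "\<bar>a * b\<bar> \<le> (a\<^sup>2 + b\<^sup>2) / (2::real)"
  using sum_squares_bound[of "\<bar>a\<bar>" "\<bar>b\<bar>"] by (simp add: abs_mult)

lemma L2_borel_measurable: "f \<in> L2 T \<Longrightarrow> f \<in> borel_measurable borel"
  by (simp add: L2_def)

lemma L2_square_integrable: "f \<in> L2 T \<Longrightarrow> set_integrable lborel {0..T} (\<lambda>x. (f x)\<^sup>2)"
  by (simp add: L2_def)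

lemma L2_dominated:
  assumes f: "f \<in> L2 T" and [measurable]: "g \<in> borel_measurable borel"
    and dom: "\<And>x. x \<in> {0..T} \<Longrightarrow> \<bar>g x\<bar> \<le> \<bar>f x\<bar>"
  shows "g \<in> L2 T"
proof -
  have "set_integrable lborel {0..T} (\<lambda>x. (g x)\<^sup>2)"
  proof (rule set_integrable_bound)
    show "set_integrable lborel {0..T} (\<lambda>x. (f x)\<^sup>2)"
      using f by (rule L2_square_integrable)
    have "(g x)\<^sup>2 \<le> (f x)\<^sup>2" if "x \<in> {0..T}" for x
      using dom[OF that] abs_le_square_iff[of "g x" "f x"] by simp
    then show "AE x in lborel. x \<in> {0..T} \<longrightarrow> norm ((g x)\<^sup>2) \<le> norm ((f x)\<^sup>2)"
      by (auto intro!: AE_I2)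
  qed (simp add: set_borel_measurable_def)
  then show ?thesis
    by (simp add: L2_def)
qed

lemma bounded_in_L2:
  assumes [measurable]: "f \<in> borel_measurable borel"
    and bound: "\<And>x. x \<in> {0..T} \<Longrightarrow> \<bar>f x\<bar> \<le> B"
  shows "f \<in> L2 T"
proof -
  have "set_integrable lborel {0..T} (\<lambda>x. (f x)\<^sup>2)"
  proof (rule set_integrable_bound)
    show "set_integrable lborel {0..T} (\<lambda>_. B\<^sup>2)"
      by (rule borel_integrable_atLeastAtMost') simp
    have "(f x)\<^sup>2 \<le> B\<^sup>2" if "x \<in> {0..T}" for x
      using bound[OF that] abs_le_square_iff[of "f x" B] by linarith
    then show "AE x in lborel. x \<in> {0..T} \<longrightarrow> norm ((f x)\<^sup>2) \<le> norm (B\<^sup>2)"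
      by (auto intro!: AE_I2)
  qed (simp add: set_borel_measurable_def)
  then show ?thesis
    by (simp add: L2_def)
qed

lemma L2_mult_integrable:
  assumes f: "f \<in> L2 T" and g: "g \<in> L2 T"
  shows "set_integrable lborel {0..T} (\<lambda>x. f x * g x)"
proof (rule set_integrable_bound)
  have [measurable]: "f \<in> borel_measurable borel" "g \<in> borel_measurable borel"
    using f g by (simp_all add: L2_borel_measurable)
  show "set_borel_measurable lborel {0..T} (\<lambda>x. f x * g x)"
    by (simp add: set_borel_measurable_def)
  show "set_integrable lborel {0..T} (\<lambda>x. ((f x)\<^sup>2 + (g x)\<^sup>2) / 2)"
    using L2_square_integrable[OF f] L2_square_integrable[OF g]
    by (intro set_integrable_divide set_integral_add(1))
  show "AE x in lborel. x \<in> {0..T} \<longrightarrow> norm (f x * g x) \<le> norm (((f x)\<^sup>2 + (g x)\<^sup>2) / 2)"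
    using abs_mult_le_half_sum_squares by (auto intro!: AE_I2)
qed

lemma L2_integrable: "f \<in> L2 T \<Longrightarrow> set_integrable lborel {0..T} f"
  using L2_mult_integrable[of f T "\<lambda>_. 1"] bounded_in_L2[of "\<lambda>_. 1" T 1] by simp

definition L2inner :: "real \<Rightarrow> (real \<Rightarrow> real) \<Rightarrow> (real \<Rightarrow> real) \<Rightarrow> real" where
  "L2inner T f g = (LINT x:{0..T}|lborel. f x * g x)"

lemma L2inner_self_nonneg: "0 \<le> L2inner T f f"
  unfolding L2inner_def set_lebesgue_integral_def
  by (rule integral_nonneg_AE) (simp add: indicator_def)

lemma L2norm_eq_sqrt_L2inner: "L2norm T f = sqrt (L2inner T f f)"
  by (simp add: L2norm_def L2inner_def power2_eq_square)

lemma L2inner_ae_cong: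
  assumes "ae_eq T f1 f2"
    and [measurable]: "f1 \<in> borel_measurable borel" "f2 \<in> borel_measurable borel" "g \<in> borel_measurable borel"
  shows "L2inner T f1 g = L2inner T f2 g"
  unfolding L2inner_def
proof (rule set_lebesgue_integral_cong_AE)
  show "AE x\<in>{0..T} in lborel. f1 x * g x = f2 x * g x"
    using assms(1) unfolding ae_eq_def by eventually_elim simp
qed measurable

lemma L2inner_le_Young:
  assumes "0 < lam" and f: "f \<in> L2 T" and g: "g \<in> L2 T"
  shows "L2inner T g f \<le> lam * L2inner T f f + L2inner T g g / (4 * lam)"
proof -
  have Young: "b * a \<le> lam * (a * a) + b * b / (4 * lam)" for a b :: real
  proof -
    have "4 * lam * (b * a) \<le> 4 * lam * (lam * (a * a) + b * b / (4 * lam))"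
      using \<open>0 < lam\<close> sum_squares_bound[of "2 * lam * a" b]
      by (simp add: power2_eq_square algebra_simps)
    then show ?thesis
      using \<open>0 < lam\<close> by simp
  qed
  have "L2inner T g f \<le> (LINT x:{0..T}|lborel. lam * (f x * f x) + g x * g x / (4 * lam))"
    unfolding L2inner_def
    using L2_mult_integrable[OF g f] L2_mult_integrable[OF f f] L2_mult_integrable[OF g g]
    by (intro set_integral_mono Young) (auto intro: set_integral_add(1) set_integrable_divide)
  also have "\<dots> = lam * L2inner T f f + L2inner T g g / (4 * lam)"
    unfolding L2inner_def
    using L2_mult_integrable[OF f f] L2_mult_integrable[OF g g]
    by (simp add: set_integral_add(2) set_integrable_divide)
  finally show ?thesis .
qed

lemma L2norm_le_of_coercive:
  assumes lam: "0 < lam" and f: "f \<in> L2 T" and g: "g \<in> L2 T"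
    and coercive: "2 * lam * L2inner T f f \<le> L2inner T g f"
  shows "L2norm T f \<le> 1 / (2 * lam) * L2norm T g"
proof -
  have "lam * L2inner T f f \<le> L2inner T g g / (4 * lam)"
    using coercive L2inner_le_Young[OF lam f g] by simp
  then have "L2inner T f f \<le> L2inner T g g / (2 * lam)\<^sup>2"
    using lam by (simp add: field_simps power2_eq_square)
  then have "sqrt (L2inner T f f) \<le> sqrt (L2inner T g g / (2 * lam)\<^sup>2)"
    by (rule real_sqrt_le_mono)
  also have "\<dots> = sqrt (L2inner T g g) / \<bar>2 * lam\<bar>"
    by (simp only: real_sqrt_divide real_sqrt_abs)
  also have "\<dots> = 1 / (2 * lam) * sqrt (L2inner T g g)"
    using lam by simp
  finally show ?thesis
    by (simp add: L2norm_eq_sqrt_L2inner)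
qed

section \<open>Kernels with uniformly square-integrable rows\<close>

definition bounded_L2_rows :: "real \<Rightarrow> (real \<Rightarrow> real \<Rightarrow> real) \<Rightarrow> bool" where
  "bounded_L2_rows T K \<longleftrightarrow>
     (\<lambda>x. K (fst x) (snd x)) \<in> borel_measurable (borel \<Otimes>\<^sub>M borel) \<and>
     (\<exists>M. \<forall>s\<in>{0..T}. set_integrable lborel {0..T} (\<lambda>u. (K s u)\<^sup>2) \<and>
                     (LINT u:{0..T}|lborel. (K s u)\<^sup>2) \<le> M)"

lemma bounded_L2_rowsI:
  assumes "(\<lambda>x. K (fst x) (snd x)) \<in> borel_measurable (borel \<Otimes>\<^sub>M borel)"
    and "\<And>s. s \<in> {0..T} \<Longrightarrow> set_integrable lborel {0..T} (\<lambda>u. (K s u)\<^sup>2)"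
    and "\<And>s. s \<in> {0..T} \<Longrightarrow> (LINT u:{0..T}|lborel. (K s u)\<^sup>2) \<le> M"
  shows "bounded_L2_rows T K"
  using assms unfolding bounded_L2_rows_def by blast

lemma bounded_L2_rowsE:
  assumes "bounded_L2_rows T K"
  obtains M where "(\<lambda>x. K (fst x) (snd x)) \<in> borel_measurable (borel \<Otimes>\<^sub>M borel)"
    and "\<And>s. s \<in> {0..T} \<Longrightarrow> set_integrable lborel {0..T} (\<lambda>u. (K s u)\<^sup>2)"
    and "\<And>s. s \<in> {0..T} \<Longrightarrow> (LINT u:{0..T}|lborel. (K s u)\<^sup>2) \<le> M"
  using assms unfolding bounded_L2_rows_def by blast

lemma borel_measurable_kernel_row:
  assumes "(\<lambda>x. K (fst x) (snd x)) \<in> borel_measurable (borel \<Otimes>\<^sub>M borel)"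
  shows "K s \<in> borel_measurable borel"
  using measurable_Pair2[OF assms, of s] by simp

lemma borel_measurable_kernel_transpose:
  assumes "(\<lambda>x. K (fst x) (snd x)) \<in> borel_measurable (borel \<Otimes>\<^sub>M borel)"
  shows "(\<lambda>x. K (snd x) (fst x)) \<in> borel_measurable (borel \<Otimes>\<^sub>M borel)"
  using measurable_comp[OF measurable_pair_swap' assms] by (simp add: comp_def case_prod_beta)

lemma bounded_L2_rowsI_nn_integral:
  assumes meas [measurable]: "(\<lambda>x. K (fst x) (snd x)) \<in> borel_measurable (borel \<Otimes>\<^sub>M borel)"
    and rows: "\<And>s. s \<in> {0..T} \<Longrightarrow> (\<integral>\<^sup>+u\<in>{0..T}. ennreal ((K s u)\<^sup>2) \<partial>lborel) \<le> ennreal M"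
  shows "bounded_L2_rows T K"
proof (rule bounded_L2_rowsI[where M = "max M 0"])
  fix s assume s: "s \<in> {0..T}"
  have [measurable]: "K s \<in> borel_measurable borel"
    by (rule borel_measurable_kernel_row[OF meas])
  have nn: "(\<integral>\<^sup>+u. ennreal (indicator {0..T} u * (K s u)\<^sup>2) \<partial>lborel)
      = (\<integral>\<^sup>+u\<in>{0..T}. ennreal ((K s u)\<^sup>2) \<partial>lborel)"
    by (auto intro!: nn_integral_cong split: split_indicator)
  show int: "set_integrable lborel {0..T} (\<lambda>u. (K s u)\<^sup>2)"
    unfolding set_integrable_def
    by (rule integrableI_nonneg) (auto simp: nn intro: le_less_trans[OF rows[OF s]])
  have "ennreal (LINT u:{0..T}|lborel. (K s u)\<^sup>2) = (\<integral>\<^sup>+u\<in>{0..T}. ennreal ((K s u)\<^sup>2) \<partial>lborel)"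
    using int unfolding set_integrable_def set_lebesgue_integral_def nn[symmetric]
    by (subst nn_integral_eq_integral) auto
  with rows[OF s] have "ennreal (LINT u:{0..T}|lborel. (K s u)\<^sup>2) \<le> ennreal M"
    by simp
  then show "(LINT u:{0..T}|lborel. (K s u)\<^sup>2) \<le> max M 0"
    by (auto simp: ennreal_le_iff2)
qed fact

lemma bounded_L2_rows_bounded:
  assumes [measurable]: "(\<lambda>x. K (fst x) (snd x)) \<in> borel_measurable (borel \<Otimes>\<^sub>M borel)"
    and bound: "\<And>s u. s \<in> {0..T} \<Longrightarrow> u \<in> {0..T} \<Longrightarrow> \<bar>K s u\<bar> \<le> c"
  shows "bounded_L2_rows T K"
proof (rule bounded_L2_rowsI[where M = "LINT u:{0..T}|lborel. c\<^sup>2"])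
  fix s assume s: "s \<in> {0..T}"
  have [measurable]: "K s \<in> borel_measurable borel"
    by (rule borel_measurable_kernel_row) measurable
  have sq: "(K s u)\<^sup>2 \<le> c\<^sup>2" if "u \<in> {0..T}" for u
    using bound[OF s that] abs_le_square_iff[of "K s u" c] by linarith
  have const: "set_integrable lborel {0..T} (\<lambda>_. c\<^sup>2)"
    by (rule borel_integrable_atLeastAtMost') simp
  show int: "set_integrable lborel {0..T} (\<lambda>u. (K s u)\<^sup>2)"
    using const by (rule set_integrable_bound) (auto intro!: AE_I2 sq simp: set_borel_measurable_def)
  show "(LINT u:{0..T}|lborel. (K s u)\<^sup>2) \<le> (LINT u:{0..T}|lborel. c\<^sup>2)"
    using int const sq by (rule set_integral_mono)
qed measurable

lemma bounded_L2_rows_add: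
  assumes K1: "bounded_L2_rows T K1" and K2: "bounded_L2_rows T K2"
  shows "bounded_L2_rows T (\<lambda>s u. K1 s u + K2 s u)"
proof -
  obtain M1 where [measurable]: "(\<lambda>x. K1 (fst x) (snd x)) \<in> borel_measurable (borel \<Otimes>\<^sub>M borel)"
    and int1: "\<And>s. s \<in> {0..T} \<Longrightarrow> set_integrable lborel {0..T} (\<lambda>u. (K1 s u)\<^sup>2)"
    and le1: "\<And>s. s \<in> {0..T} \<Longrightarrow> (LINT u:{0..T}|lborel. (K1 s u)\<^sup>2) \<le> M1"
    using bounded_L2_rowsE[OF K1] by blast
  obtain M2 where [measurable]: "(\<lambda>x. K2 (fst x) (snd x)) \<in> borel_measurable (borel \<Otimes>\<^sub>M borel)"
    and int2: "\<And>s. s \<in> {0..T} \<Longrightarrow> set_integrable lborel {0..T} (\<lambda>u. (K2 s u)\<^sup>2)"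
    and le2: "\<And>s. s \<in> {0..T} \<Longrightarrow> (LINT u:{0..T}|lborel. (K2 s u)\<^sup>2) \<le> M2"
    using bounded_L2_rowsE[OF K2] by blast
  show ?thesis
  proof (rule bounded_L2_rowsI[where M = "2 * M1 + 2 * M2"])
    fix s assume s: "s \<in> {0..T}"
    have [measurable]: "K1 s \<in> borel_measurable borel" "K2 s \<in> borel_measurable borel"
      by (rule borel_measurable_kernel_row, measurable)+
    have sq: "(K1 s u + K2 s u)\<^sup>2 \<le> 2 * (K1 s u)\<^sup>2 + 2 * (K2 s u)\<^sup>2" for u
      unfolding power2_sum using sum_squares_bound[of "K1 s u" "K2 s u"] by linarith
    have dom: "set_integrable lborel {0..T} (\<lambda>u. 2 * (K1 s u)\<^sup>2 + 2 * (K2 s u)\<^sup>2)"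
      using int1[OF s] int2[OF s] by (intro set_integral_add(1) set_integrable_mult_right)
    show int: "set_integrable lborel {0..T} (\<lambda>u. (K1 s u + K2 s u)\<^sup>2)"
      using dom by (rule set_integrable_bound) (auto intro!: AE_I2 sq simp: set_borel_measurable_def)
    have "(LINT u:{0..T}|lborel. (K1 s u + K2 s u)\<^sup>2)
        \<le> (LINT u:{0..T}|lborel. 2 * (K1 s u)\<^sup>2 + 2 * (K2 s u)\<^sup>2)"
      using int dom sq by (rule set_integral_mono)
    also have "\<dots> \<le> 2 * M1 + 2 * M2"
      using int1[OF s] int2[OF s] le1[OF s] le2[OF s]
      by (simp add: set_integral_add(2) set_integrable_mult_right)
    finally show "(LINT u:{0..T}|lborel. (K1 s u + K2 s u)\<^sup>2) \<le> 2 * M1 + 2 * M2" .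
  qed measurable
qed

lemma bounded_L2_rows_dominated:
  assumes K: "bounded_L2_rows T K"
    and [measurable]: "(\<lambda>x. K' (fst x) (snd x)) \<in> borel_measurable (borel \<Otimes>\<^sub>M borel)"
    and dom: "\<And>s u. s \<in> {0..T} \<Longrightarrow> u \<in> {0..T} \<Longrightarrow> \<bar>K' s u\<bar> \<le> \<bar>K s u\<bar>"
  shows "bounded_L2_rows T K'"
proof -
  obtain M where int_K: "\<And>s. s \<in> {0..T} \<Longrightarrow> set_integrable lborel {0..T} (\<lambda>u. (K s u)\<^sup>2)"
    and le_M: "\<And>s. s \<in> {0..T} \<Longrightarrow> (LINT u:{0..T}|lborel. (K s u)\<^sup>2) \<le> M"
    using bounded_L2_rowsE[OF K] by blast
  show ?thesis
  proof (rule bounded_L2_rowsI[where M = M])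
    fix s assume s: "s \<in> {0..T}"
    have [measurable]: "K' s \<in> borel_measurable borel"
      by (rule borel_measurable_kernel_row) measurable
    have sq: "(K' s u)\<^sup>2 \<le> (K s u)\<^sup>2" if "u \<in> {0..T}" for u
      using dom[OF s that] abs_le_square_iff[of "K' s u" "K s u"] by simp
    show int: "set_integrable lborel {0..T} (\<lambda>u. (K' s u)\<^sup>2)"
      using int_K[OF s] by (rule set_integrable_bound) (auto intro!: AE_I2 sq simp: set_borel_measurable_def)
    have "(LINT u:{0..T}|lborel. (K' s u)\<^sup>2) \<le> (LINT u:{0..T}|lborel. (K s u)\<^sup>2)"
      using int int_K[OF s] sq by (rule set_integral_mono)
    also have "\<dots> \<le> M"
      using s by (rule le_M)
    finally show "(LINT u:{0..T}|lborel. (K' s u)\<^sup>2) \<le> M" .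
  qed measurable
qed

lemma bounded_L2_rows_row_in_L2:
  assumes "bounded_L2_rows T K" and "s \<in> {0..T}"
  shows "K s \<in> L2 T"
proof -
  obtain M where "(\<lambda>x. K (fst x) (snd x)) \<in> borel_measurable (borel \<Otimes>\<^sub>M borel)"
    and "set_integrable lborel {0..T} (\<lambda>u. (K s u)\<^sup>2)"
    using bounded_L2_rowsE[OF assms(1)] assms(2) by metis
  then show ?thesis
    unfolding L2_def by (auto intro: borel_measurable_kernel_row)
qed

lemma kop_integrable:
  "bounded_L2_rows T K \<Longrightarrow> h \<in> L2 T \<Longrightarrow> s \<in> {0..T} \<Longrightarrow>
    set_integrable lborel {0..T} (\<lambda>u. K s u * h u)"
  by (rule L2_mult_integrable[OF bounded_L2_rows_row_in_L2])

lemma kop_add_kernel: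
  assumes "bounded_L2_rows T K1" "bounded_L2_rows T K2" "h \<in> L2 T" "s \<in> {0..T}"
  shows "kop T (\<lambda>s u. K1 s u + K2 s u) h s = kop T K1 h s + kop T K2 h s"
  using kop_integrable[OF assms(1,3,4)] kop_integrable[OF assms(2,3,4)]
  by (simp add: kop_def distrib_right set_integral_add(2))

lemma borel_measurable_pair_lborel:
  "f \<in> borel_measurable (borel \<Otimes>\<^sub>M borel) \<Longrightarrow> f \<in> borel_measurable (lborel \<Otimes>\<^sub>M (lborel::real measure))"
  by (subst measurable_cong_sets[OF sets_pair_measure_cong[OF sets_lborel sets_lborel] refl]) simp

lemma borel_measurable_kop:
  assumes [measurable]: "(\<lambda>x. K (fst x) (snd x)) \<in> borel_measurable (borel \<Otimes>\<^sub>M borel)"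
    and [measurable]: "h \<in> borel_measurable borel"
  shows "kop T K h \<in> borel_measurable borel"
proof -
  have "(\<lambda>s. \<integral>u. indicator {0..T} u *\<^sub>R (K s u * h u) \<partial>lborel) \<in> borel_measurable lborel"
    by (rule lborel.borel_measurable_lebesgue_integral, rule borel_measurable_pair_lborel)
      (simp add: case_prod_beta', measurable)
  then show ?thesis
    unfolding kop_def set_lebesgue_integral_def by simp
qed

lemma kop_bounded:
  assumes K: "bounded_L2_rows T K" and h: "h \<in> L2 T"
  shows "\<exists>B. \<forall>s\<in>{0..T}. \<bar>kop T K h s\<bar> \<le> B"
proof -
  obtain M where int_K: "\<And>s. s \<in> {0..T} \<Longrightarrow> set_integrable lborel {0..T} (\<lambda>u. (K s u)\<^sup>2)"
    and le_M: "\<And>s. s \<in> {0..T} \<Longrightarrow> (LINT u:{0..T}|lborel. (K s u)\<^sup>2) \<le> M"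
    using bounded_L2_rowsE[OF K] by blast
  have "\<bar>kop T K h s\<bar> \<le> (M + (LINT u:{0..T}|lborel. (h u)\<^sup>2)) / 2" if s: "s \<in> {0..T}" for s
  proof -
    have int: "set_integrable lborel {0..T} (\<lambda>u. ((K s u)\<^sup>2 + (h u)\<^sup>2) / 2)"
      using int_K[OF s] L2_square_integrable[OF h] by (intro set_integrable_divide set_integral_add(1))
    have "\<bar>kop T K h s\<bar> \<le> (LINT u:{0..T}|lborel. \<bar>K s u * h u\<bar>)"
      unfolding kop_def using set_integral_norm_bound[OF kop_integrable[OF K h s]] by simp
    also have "\<dots> \<le> (LINT u:{0..T}|lborel. ((K s u)\<^sup>2 + (h u)\<^sup>2) / 2)"
      using set_integrable_abs[OF kop_integrable[OF K h s]] int abs_mult_le_half_sum_squares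
      by (rule set_integral_mono)
    also have "\<dots> = ((LINT u:{0..T}|lborel. (K s u)\<^sup>2) + (LINT u:{0..T}|lborel. (h u)\<^sup>2)) / 2"
      using int_K[OF s] L2_square_integrable[OF h] by (simp add: set_integral_add(2))
    also have "\<dots> \<le> (M + (LINT u:{0..T}|lborel. (h u)\<^sup>2)) / 2"
      using le_M[OF s] by simp
    finally show ?thesis .
  qed
  then show ?thesis
    by blast
qed

lemma kop_in_L2:
  assumes K: "bounded_L2_rows T K" and h: "h \<in> L2 T"
  shows "kop T K h \<in> L2 T"
proof -
  obtain B where "\<And>s. s \<in> {0..T} \<Longrightarrow> \<bar>kop T K h s\<bar> \<le> B"
    using kop_bounded[OF K h] by blast
  moreover have "kop T K h \<in> borel_measurable borel"
    using K h by (intro borel_measurable_kop) (auto elim: bounded_L2_rowsE intro: L2_borel_measurable)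
  ultimately show ?thesis
    by (intro bounded_in_L2)
qed

lemma integrable_pair_lborel_product:
  fixes f g :: "real \<Rightarrow> real"
  assumes f: "integrable lborel f" and g: "integrable lborel g"
  shows "integrable (lborel \<Otimes>\<^sub>M lborel) (\<lambda>x. f (fst x) * g (snd x))"
proof (rule lborel_pair.Fubini_integrable)
  have [measurable]: "f \<in> borel_measurable borel" "g \<in> borel_measurable borel"
    using borel_measurable_integrable[OF f] borel_measurable_integrable[OF g] by simp_all
  show "(\<lambda>x. f (fst x) * g (snd x)) \<in> borel_measurable (lborel \<Otimes>\<^sub>M lborel)"
    by (rule borel_measurable_pair_lborel) measurable
  show "integrable lborel (\<lambda>x. \<integral>y. norm (f (fst (x, y)) * g (snd (x, y))) \<partial>lborel)"
    using f by (simp add: abs_mult)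
  show "AE x in lborel. integrable lborel (\<lambda>y. f (fst (x, y)) * g (snd (x, y)))"
    using g by simp
qed

lemma nested_set_integral_eq_integral:
  fixes \<psi> :: "real \<Rightarrow> real \<Rightarrow> real"
  shows "(LINT s:A|lborel. (LINT u:B|lborel. \<psi> s u))
       = (\<integral>s. (\<integral>u. indicator A s * indicator B u * \<psi> s u \<partial>lborel) \<partial>lborel)"
  unfolding set_lebesgue_integral_def
  by (rule Bochner_Integration.integral_cong[OF refl])
    (simp only: real_scaleR_def integral_mult_right_zero[symmetric] mult.assoc)

lemma integrable_bounded_kernel_pair:
  assumes [measurable]: "(\<lambda>x. K (fst x) (snd x)) \<in> borel_measurable (borel \<Otimes>\<^sub>M borel)"
    and bound: "\<And>s u. s \<in> {0..T} \<Longrightarrow> u \<in> {0..T} \<Longrightarrow> \<bar>K s u\<bar> \<le> c"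
    and f: "f \<in> L2 T" and g: "g \<in> L2 T"
  shows "integrable (lborel \<Otimes>\<^sub>M lborel)
    (\<lambda>(s, u). indicator {0..T} s * indicator {0..T} u * (f s * K s u * g u))"
proof (rule Bochner_Integration.integrable_bound)
  have [measurable]: "f \<in> borel_measurable borel" "g \<in> borel_measurable borel"
    using f g by (simp_all add: L2_borel_measurable)
  have "integrable lborel (\<lambda>s. indicator {0..T} s * \<bar>f s\<bar>)"
    "integrable lborel (\<lambda>u. indicator {0..T} u * \<bar>g u\<bar>)"
    using set_integrable_abs[OF L2_integrable[OF f]] set_integrable_abs[OF L2_integrable[OF g]]
    by (simp_all add: set_integrable_def)
  then show "integrable (lborel \<Otimes>\<^sub>M lborel)
      (\<lambda>x. (\<bar>c\<bar> * (indicator {0..T} (fst x) * \<bar>f (fst x)\<bar>)) * (indicator {0..T} (snd x) * \<bar>g (snd x)\<bar>))"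
    by (intro integrable_pair_lborel_product integrable_mult_right)
  show "(\<lambda>(s, u). indicator {0..T} s * indicator {0..T} u * (f s * K s u * g u))
      \<in> borel_measurable (lborel \<Otimes>\<^sub>M lborel)"
    by (rule borel_measurable_pair_lborel) (simp add: case_prod_beta', measurable)
  have "\<bar>indicator {0..T} s * indicator {0..T} u * (f s * K s u * g u)\<bar>
      \<le> \<bar>c\<bar> * (indicator {0..T} s * \<bar>f s\<bar>) * (indicator {0..T} u * \<bar>g u\<bar>)" for s u
  proof (cases "s \<in> {0..T} \<and> u \<in> {0..T}")
    case True
    then have "\<bar>K s u\<bar> * (\<bar>f s\<bar> * \<bar>g u\<bar>) \<le> \<bar>c\<bar> * (\<bar>f s\<bar> * \<bar>g u\<bar>)"
      using bound[of s u] by (intro mult_right_mono) auto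
    with True show ?thesis
      by (simp add: abs_mult mult_ac)
  qed auto
  then show "AE x in lborel \<Otimes>\<^sub>M lborel.
      norm ((\<lambda>(s, u). indicator {0..T} s * indicator {0..T} u * (f s * K s u * g u)) x)
      \<le> norm ((\<bar>c\<bar> * (indicator {0..T} (fst x) * \<bar>f (fst x)\<bar>)) * (indicator {0..T} (snd x) * \<bar>g (snd x)\<bar>))"
    by (intro AE_I2) (simp add: case_prod_beta' abs_mult)
qed

lemma L2inner_kop_adjk:
  assumes meas: "(\<lambda>x. K (fst x) (snd x)) \<in> borel_measurable (borel \<Otimes>\<^sub>M borel)"
    and bound: "\<And>s u. s \<in> {0..T} \<Longrightarrow> u \<in> {0..T} \<Longrightarrow> \<bar>K s u\<bar> \<le> c"
    and F: "F \<in> L2 T" and f: "f \<in> L2 T"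
  shows "L2inner T (kop T (adjk K) F) f = L2inner T F (kop T K f)"
proof -
  define \<phi> where "\<phi> = (\<lambda>u s. indicator {0..T} u * indicator {0..T} s * (F u * K u s * f s))"
  have Fubini: "(\<integral>s. (\<integral>u. \<phi> u s \<partial>lborel) \<partial>lborel) = (\<integral>u. (\<integral>s. \<phi> u s \<partial>lborel) \<partial>lborel)"
    using integrable_bounded_kernel_pair[OF meas bound F f]
    by (intro lborel_pair.Fubini_integral) (simp add: \<phi>_def case_prod_beta')
  have "L2inner T (kop T (adjk K) F) f = (LINT s:{0..T}|lborel. (LINT u:{0..T}|lborel. K u s * F u * f s))"
    by (simp add: L2inner_def kop_def adjk_def)
  also have "\<dots> = (\<integral>s. (\<integral>u. \<phi> u s \<partial>lborel) \<partial>lborel)"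
    by (simp only: nested_set_integral_eq_integral \<phi>_def mult_ac)
  also have "\<dots> = (\<integral>u. (\<integral>s. \<phi> u s \<partial>lborel) \<partial>lborel)"
    by (rule Fubini)
  also have "\<dots> = (LINT u:{0..T}|lborel. (LINT s:{0..T}|lborel. F u * (K u s * f s)))"
    by (simp only: nested_set_integral_eq_integral \<phi>_def mult_ac)
  also have "\<dots> = L2inner T F (kop T K f)"
    by (simp add: L2inner_def kop_def)
  finally show ?thesis .
qed

section \<open>Quadratic forms of kernels\<close>

definition kernel_form :: "real \<Rightarrow> (real \<Rightarrow> real \<Rightarrow> real) \<Rightarrow> (real \<Rightarrow> real) \<Rightarrow> real" where
  "kernel_form T K f = (LINT s:{0..T}|lborel. (LINT u:{0..T}|lborel. K s u * f u * f s))"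

lemma kernel_form_eq_L2inner: "kernel_form T K f = L2inner T (kop T K f) f"
  by (simp add: kernel_form_def L2inner_def kop_def)

lemma kernel_form_add:
  assumes K1: "bounded_L2_rows T K1" and K2: "bounded_L2_rows T K2" and f: "f \<in> L2 T"
  shows "kernel_form T (\<lambda>s u. K1 s u + K2 s u) f = kernel_form T K1 f + kernel_form T K2 f"
proof -
  have "L2inner T (kop T (\<lambda>s u. K1 s u + K2 s u) f) f
      = (LINT s:{0..T}|lborel. kop T K1 f s * f s + kop T K2 f s * f s)"
    unfolding L2inner_def
    by (rule set_lebesgue_integral_cong) (simp_all add: kop_add_kernel[OF K1 K2 f] distrib_right)
  also have "\<dots> = L2inner T (kop T K1 f) f + L2inner T (kop T K2 f) f"
    unfolding L2inner_def
    using L2_mult_integrable[OF kop_in_L2[OF K1 f] f] L2_mult_integrable[OF kop_in_L2[OF K2 f] f]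
    by (rule set_integral_add(2))
  finally show ?thesis
    by (simp add: kernel_form_eq_L2inner)
qed

lemma kernel_form_offdiagonal_const:
  assumes h: "h \<in> L2 T"
  shows "kernel_form T (\<lambda>s u. if u = s then 0 else c) h = c * (LINT u:{0..T}|lborel. h u)\<^sup>2"
proof -
  have [measurable]: "h \<in> borel_measurable borel"
    using h by (rule L2_borel_measurable)
  have inner: "(LINT u:{0..T}|lborel. (if u = s then 0 else c) * h u * h s)
      = c * (LINT u:{0..T}|lborel. h u) * h s" for s
  proof -
    have "(LINT u:{0..T}|lborel. (if u = s then 0 else c) * h u * h s)
        = (LINT u:{0..T}|lborel. c * h u * h s)"
    proof (rule set_lebesgue_integral_cong_AE)
      show "AE u\<in>{0..T} in lborel. (if u = s then 0 else c) * h u * h s = c * h u * h s"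
        using AE_lborel_singleton[of s] by eventually_elim simp
    qed measurable
    then show ?thesis
      by simp
  qed
  show ?thesis
    unfolding kernel_form_def inner by (simp add: power2_eq_square)
qed

lemma kernel_class_measurable:
  "kernel_class T G \<Longrightarrow> (\<lambda>x. G (fst x) (snd x)) \<in> borel_measurable (borel \<Otimes>\<^sub>M borel)"
  by (simp add: kernel_class_def borel_prod case_prod_beta')

lemma kernel_class_Volterra:
  "kernel_class T G \<Longrightarrow> a \<in> {0..T} \<Longrightarrow> b \<in> {0..T} \<Longrightarrow> a \<le> b \<Longrightarrow> G a b = 0"
  by (simp add: kernel_class_def)

lemma kernel_class_form_nonneg:
  "kernel_class T G \<Longrightarrow> f \<in> L2 T \<Longrightarrow> 0 \<le> kernel_form T (\<lambda>s u. G s u + G u s) f"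
  by (simp add: kernel_class_def kernel_form_def)

lemma kernel_class_bounded_L2_rows:
  assumes G: "kernel_class T G"
  shows "bounded_L2_rows T G" and "bounded_L2_rows T (\<lambda>s u. G u s)"
proof -
  obtain M where
    rows: "\<And>s. s \<in> {0..T} \<Longrightarrow> (\<integral>\<^sup>+u\<in>{0..T}. ennreal ((G s u)\<^sup>2) \<partial>lborel) \<le> ennreal M" and
    cols: "\<And>s. s \<in> {0..T} \<Longrightarrow> (\<integral>\<^sup>+u\<in>{0..T}. ennreal ((G u s)\<^sup>2) \<partial>lborel) \<le> ennreal M"
    using G unfolding kernel_class_def by blast
  show "bounded_L2_rows T G"
    using kernel_class_measurable[OF G] rows by (rule bounded_L2_rowsI_nn_integral)
  show "bounded_L2_rows T (\<lambda>s u. G u s)"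
    using borel_measurable_kernel_transpose[OF kernel_class_measurable[OF G]] cols
    by (rule bounded_L2_rowsI_nn_integral)
qed

lemma bounded_L2_rows_Gtil:
  assumes G: "kernel_class T G"
  shows "bounded_L2_rows T (Gtil \<rho> G)" and "bounded_L2_rows T (adjk (Gtil \<rho> G))"
proof -
  have step: "bounded_L2_rows T (\<lambda>s u. 2 * \<rho> * (if u < s then 1 else 0))"
    and step_transpose: "bounded_L2_rows T (\<lambda>s u. 2 * \<rho> * (if s < u then 1 else 0))"
    by (auto intro!: bounded_L2_rows_bounded[where c = "\<bar>2 * \<rho>\<bar>"])
  show "bounded_L2_rows T (Gtil \<rho> G)"
    using bounded_L2_rows_add[OF step kernel_class_bounded_L2_rows(1)[OF G]]
    by (simp add: Gtil_def[abs_def])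
  show "bounded_L2_rows T (adjk (Gtil \<rho> G))"
    using bounded_L2_rows_add[OF step_transpose kernel_class_bounded_L2_rows(2)[OF G]]
    by (simp add: adjk_def Gtil_def[abs_def])
qed

lemma bounded_L2_rows_Gtil_t:
  assumes G: "kernel_class T G"
  shows "bounded_L2_rows T (Gtil_t \<rho> G t)" and "bounded_L2_rows T (adjk (Gtil_t \<rho> G t))"
proof -
  have [measurable]: "(\<lambda>x. G (fst x) (snd x)) \<in> borel_measurable (borel \<Otimes>\<^sub>M borel)"
    "(\<lambda>x. G (snd x) (fst x)) \<in> borel_measurable (borel \<Otimes>\<^sub>M borel)"
    using kernel_class_measurable[OF G] by (simp_all add: borel_measurable_kernel_transpose)
  show "bounded_L2_rows T (Gtil_t \<rho> G t)"
    by (rule bounded_L2_rows_dominated[OF bounded_L2_rows_Gtil(1)[OF G]])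
      (auto simp: Gtil_t_def Gtil_def abs_mult)
  show "bounded_L2_rows T (adjk (Gtil_t \<rho> G t))"
    by (rule bounded_L2_rows_dominated[OF bounded_L2_rows_Gtil(2)[OF G]])
      (auto simp: adjk_def Gtil_t_def Gtil_def abs_mult)
qed

lemma kernel_form_Gtil_nonneg:
  assumes G: "kernel_class T G" and "0 \<le> \<rho>" and h: "h \<in> L2 T"
  shows "0 \<le> kernel_form T (\<lambda>s u. Gtil \<rho> G s u + Gtil \<rho> G u s) h"
proof -
  have offdiag: "bounded_L2_rows T (\<lambda>s u. if u = s then 0 else 2 * \<rho>)"
    by (auto intro!: bounded_L2_rows_bounded[where c = "2 * \<rho>"] simp: \<open>0 \<le> \<rho>\<close>)
  have sym: "bounded_L2_rows T (\<lambda>s u. G s u + G u s)"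
    using kernel_class_bounded_L2_rows[OF G] by (rule bounded_L2_rows_add)
  have "(\<lambda>s u. Gtil \<rho> G s u + Gtil \<rho> G u s) = (\<lambda>s u. (if u = s then 0 else 2 * \<rho>) + (G s u + G u s))"
    by (auto simp: fun_eq_iff Gtil_def)
  then have "kernel_form T (\<lambda>s u. Gtil \<rho> G s u + Gtil \<rho> G u s) h
      = 2 * \<rho> * (LINT u:{0..T}|lborel. h u)\<^sup>2 + kernel_form T (\<lambda>s u. G s u + G u s) h"
    by (simp add: kernel_form_add[OF offdiag sym h] kernel_form_offdiagonal_const[OF h])
  then show ?thesis
    using kernel_class_form_nonneg[OF G h] \<open>0 \<le> \<rho>\<close> by simp
qed

text \<open>The Volterra property kills the cross terms in which exactly one of s, u lies before t.\<close>

lemma kernel_form_Gtil_t: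
  assumes Volterra: "\<And>a b. a \<in> {0..T} \<Longrightarrow> b \<in> {0..T} \<Longrightarrow> a \<le> b \<Longrightarrow> G a b = 0"
  shows "kernel_form T (\<lambda>s u. Gtil_t \<rho> G t s u + adjk (Gtil_t \<rho> G t) s u) f
       = kernel_form T (\<lambda>s u. Gtil \<rho> G s u + Gtil \<rho> G u s) (\<lambda>u. if t \<le> u then f u else 0)"
proof -
  have "(Gtil_t \<rho> G t s u + Gtil_t \<rho> G t u s) * f u * f s
      = (Gtil \<rho> G s u + Gtil \<rho> G u s) * (if t \<le> u then f u else 0) * (if t \<le> s then f s else 0)"
    if "s \<in> {0..T}" "u \<in> {0..T}" for s u
    using Volterra[OF that] Volterra[OF that(2,1)]
    by (cases "t \<le> u"; cases "t \<le> s"; cases "s \<le> u"; cases "u \<le> s") (auto simp: Gtil_t_def Gtil_def)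
  then show ?thesis
    unfolding kernel_form_def adjk_def
    by (intro set_lebesgue_integral_cong allI impI) auto
qed

section \<open>Coercivity of D_t\<close>

lemma one_t_measurable: "(\<lambda>x. one_t t (fst x) (snd x)) \<in> borel_measurable (borel \<Otimes>\<^sub>M borel)"
  unfolding one_t_def by measurable

lemma abs_one_t_le: "\<bar>one_t t s u\<bar> \<le> 1"
  by (simp add: one_t_def)

lemma bounded_L2_rows_one_t:
  shows "bounded_L2_rows T (one_t t)" and "bounded_L2_rows T (adjk (one_t t))"
  using one_t_measurable borel_measurable_kernel_transpose[OF one_t_measurable]
  by (auto intro!: bounded_L2_rows_bounded[where c = 1] simp: abs_one_t_le adjk_def)

lemma borel_measurable_D_op:
  assumes G: "kernel_class T G" and f: "f \<in> L2 T"
  shows "D_op T lam \<phi> \<rho> G t f \<in> borel_measurable borel"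
proof -
  have [measurable]: "f \<in> borel_measurable borel"
    "kop T (Gtil_t \<rho> G t) f \<in> borel_measurable borel"
    "kop T (adjk (Gtil_t \<rho> G t)) f \<in> borel_measurable borel"
    "kop T (adjk (one_t t)) (kop T (one_t t) f) \<in> borel_measurable borel"
    using f bounded_L2_rows_Gtil_t[OF G] bounded_L2_rows_one_t
    by (auto intro!: L2_borel_measurable kop_in_L2)
  show ?thesis
    unfolding D_op_def by measurable
qed

lemma L2inner_D_op:
  assumes G: "kernel_class T G" and f: "f \<in> L2 T"
  shows "L2inner T (D_op T lam \<phi> \<rho> G t f) f = 2 * lam * L2inner T f f
     + kernel_form T (\<lambda>s u. Gtil_t \<rho> G t s u + adjk (Gtil_t \<rho> G t) s u) f
     + 2 * \<phi> * L2inner T (kop T (one_t t) f) (kop T (one_t t) f)"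
proof -
  note K = bounded_L2_rows_Gtil_t[OF G, of \<rho> t] and one = bounded_L2_rows_one_t[of T t]
  define F where "F = kop T (one_t t) f"
  have F: "F \<in> L2 T"
    unfolding F_def using one(1) f by (rule kop_in_L2)
  have "L2inner T (D_op T lam \<phi> \<rho> G t f) f = (LINT s:{0..T}|lborel. 2 * lam * (f s * f s)
      + (kop T (Gtil_t \<rho> G t) f s * f s + kop T (adjk (Gtil_t \<rho> G t)) f s * f s)
      + 2 * \<phi> * (kop T (adjk (one_t t)) F s * f s))"
    unfolding L2inner_def
    by (intro set_lebesgue_integral_cong) (auto simp: D_op_def F_def algebra_simps)
  also have "\<dots> = 2 * lam * L2inner T f f
      + (L2inner T (kop T (Gtil_t \<rho> G t) f) f + L2inner T (kop T (adjk (Gtil_t \<rho> G t)) f) f)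
      + 2 * \<phi> * L2inner T (kop T (adjk (one_t t)) F) f"
    using L2_mult_integrable[OF f f] L2_mult_integrable[OF kop_in_L2[OF K(1) f] f]
      L2_mult_integrable[OF kop_in_L2[OF K(2) f] f] L2_mult_integrable[OF kop_in_L2[OF one(2) F] f]
    by (simp add: L2inner_def set_integral_add set_integrable_mult_right)
  also have "L2inner T (kop T (Gtil_t \<rho> G t) f) f + L2inner T (kop T (adjk (Gtil_t \<rho> G t)) f) f
      = kernel_form T (\<lambda>s u. Gtil_t \<rho> G t s u + adjk (Gtil_t \<rho> G t) s u) f"
    using kernel_form_add[OF K f] unfolding kernel_form_eq_L2inner by (rule sym)
  also have "L2inner T (kop T (adjk (one_t t)) F) f = L2inner T F F"
    using L2inner_kop_adjk[OF one_t_measurable abs_one_t_le F f] by (simp add: F_def)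
  finally show ?thesis
    by (simp add: F_def)
qed

lemma D_op_coercive:
  assumes G: "kernel_class T G" and "0 \<le> \<phi>" "0 \<le> \<rho>" and f: "f \<in> L2 T"
  shows "2 * lam * L2inner T f f \<le> L2inner T (D_op T lam \<phi> \<rho> G t f) f"
proof -
  have [measurable]: "f \<in> borel_measurable borel"
    using f by (rule L2_borel_measurable)
  have h: "(\<lambda>u. if t \<le> u then f u else 0) \<in> L2 T"
  proof (rule L2_dominated[OF f])
    show "(\<lambda>u. if t \<le> u then f u else 0) \<in> borel_measurable borel"
      by measurable
  qed auto
  have "0 \<le> kernel_form T (\<lambda>s u. Gtil \<rho> G s u + Gtil \<rho> G u s) (\<lambda>u. if t \<le> u then f u else 0)"
    using G \<open>0 \<le> \<rho>\<close> h by (rule kernel_form_Gtil_nonneg)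
  also have "\<dots> = kernel_form T (\<lambda>s u. Gtil_t \<rho> G t s u + adjk (Gtil_t \<rho> G t) s u) f"
    by (rule kernel_form_Gtil_t[OF kernel_class_Volterra[OF G], symmetric])
  finally have Volterra_part: "0 \<le> kernel_form T (\<lambda>s u. Gtil_t \<rho> G t s u + adjk (Gtil_t \<rho> G t) s u) f" .
  have indicator_part: "0 \<le> \<phi> * L2inner T (kop T (one_t t) f) (kop T (one_t t) f)"
    using \<open>0 \<le> \<phi>\<close> L2inner_self_nonneg by simp
  show ?thesis
    using Volterra_part indicator_part unfolding L2inner_D_op[OF G f] by simp
qed

theorem lemma7p2:
  fixes T lam \<phi> \<rho> :: real and G :: "real \<Rightarrow> real \<Rightarrow> real"
  assumes "T > 0" and "lam > 0" and "\<phi> \<ge> 0" and "\<rho> \<ge> 0"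
    and "kernel_class T G"
    and invertible: "\<forall>t\<in>{0..T}.
           (\<forall>g\<in>L2 T. \<exists>f\<in>L2 T. ae_eq T (D_op T lam \<phi> \<rho> G t f) g) \<and>
           (\<forall>f1\<in>L2 T. \<forall>f2\<in>L2 T.
              ae_eq T (D_op T lam \<phi> \<rho> G t f1) (D_op T lam \<phi> \<rho> G t f2) \<longrightarrow> ae_eq T f1 f2)"
  shows "\<exists>C::real. \<forall>t\<in>{0..T}. \<forall>f\<in>L2 T. \<forall>g\<in>L2 T.
           ae_eq T (D_op T lam \<phi> \<rho> G t f) g \<longrightarrow> L2norm T f \<le> C * L2norm T g"
proof (intro exI[of _ "1 / (2 * lam)"] ballI impI)
  fix t f g
  assume f: "f \<in> L2 T" and g: "g \<in> L2 T" and Dfg: "ae_eq T (D_op T lam \<phi> \<rho> G t f) g"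
  have "L2inner T (D_op T lam \<phi> \<rho> G t f) f = L2inner T g f"
    using Dfg borel_measurable_D_op[OF \<open>kernel_class T G\<close> f] g f
    by (intro L2inner_ae_cong) (simp_all add: L2_borel_measurable)
  with D_op_coercive[OF \<open>kernel_class T G\<close> \<open>\<phi> \<ge> 0\<close> \<open>\<rho> \<ge> 0\<close> f, where lam = lam and t = t]
  have "2 * lam * L2inner T f f \<le> L2inner T g f"
    by simp
  with \<open>lam > 0\<close> f g show "L2norm T f \<le> 1 / (2 * lam) * L2norm T g"
    by (rule L2norm_le_of_coercive)
qed

end
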